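(* For every $v\in\overline{C}$, the set $T(v)$ is a clique in $G$.
   Context: All graphs are simple. $\mathcal{G}^*$ denotes the class of graphs in which any two distinct odd cycles share at most one edge. Standing setting: $G\in\mathcal{G}^*$ is $2$-connected, and $C$ is a longest odd cycle of $G$ with $|C|\ge 5$. We also write $C$ for its vertex set. Let $\overline{C}=V(G)\setminus C$, assumed nonempty. For $v\in\overline{C}$ and $w\in C$, $v$ touches $w$ if there is a $v,w$-path meeting $C$ only at $w$. $T(v)=\{w\in C: v \text{ touches } w\}$. *)

theory Defs
  imports Main
begin

definition simple_graph :: "'a set \<Rightarrow> ('a \<Rightarrow> 'a \<Rightarrow> bool) \<Rightarrow> bool" where
  "simple_graph V E \<longleftrightarrow> finite V \<and> (\<forall>x y. E x y \<longrightarrow> x \<in> V \<and> y \<in> V)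
     \<and> (\<forall>x y. E x y \<longrightarrow> E y x) \<and> (\<forall>x. \<not> E x x)"

definition is_walk :: "('a \<Rightarrow> 'a \<Rightarrow> bool) \<Rightarrow> 'a list \<Rightarrow> bool" where
  "is_walk E p \<longleftrightarrow> p \<noteq> [] \<and> (\<forall>i. Suc i < length p \<longrightarrow> E (p ! i) (p ! Suc i))"

definition is_path :: "('a \<Rightarrow> 'a \<Rightarrow> bool) \<Rightarrow> 'a list \<Rightarrow> bool" where
  "is_path E p \<longleftrightarrow> is_walk E p \<and> distinct p"

definition is_cycle :: "('a \<Rightarrow> 'a \<Rightarrow> bool) \<Rightarrow> 'a list \<Rightarrow> bool" where
  "is_cycle E c \<longleftrightarrow> length c \<ge> 3 \<and> is_path E c \<and> E (last c) (hd c)"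

definition cycle_edges :: "'a list \<Rightarrow> 'a set set" where
  "cycle_edges c = {{c ! i, c ! ((Suc i) mod length c)} | i. i < length c}"

definition is_odd_cycle :: "('a \<Rightarrow> 'a \<Rightarrow> bool) \<Rightarrow> 'a list \<Rightarrow> bool" where
  "is_odd_cycle E c \<longleftrightarrow> is_cycle E c \<and> odd (length c)"

text \<open>The class G*: any two distinct odd cycles (distinct as subgraphs, i.e. with
different edge sets) share at most one edge.\<close>
definition in_Gstar :: "('a \<Rightarrow> 'a \<Rightarrow> bool) \<Rightarrow> bool" where
  "in_Gstar E \<longleftrightarrow> (\<forall>c1 c2. is_odd_cycle E c1 \<and> is_odd_cycle E c2
      \<and> cycle_edges c1 \<noteq> cycle_edges c2 \<longrightarrow> card (cycle_edges c1 \<inter> cycle_edges c2) \<le> 1)"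

definition connected_on :: "'a set \<Rightarrow> ('a \<Rightarrow> 'a \<Rightarrow> bool) \<Rightarrow> bool" where
  "connected_on S E \<longleftrightarrow> S \<noteq> {} \<and> (\<forall>x\<in>S. \<forall>y\<in>S. \<exists>p. is_path E p \<and> set p \<subseteq> S
      \<and> hd p = x \<and> last p = y)"

definition two_connected :: "'a set \<Rightarrow> ('a \<Rightarrow> 'a \<Rightarrow> bool) \<Rightarrow> bool" where
  "two_connected V E \<longleftrightarrow> card V \<ge> 3 \<and> connected_on V E
      \<and> (\<forall>x\<in>V. connected_on (V - {x}) E)"

definition longest_odd_cycle :: "('a \<Rightarrow> 'a \<Rightarrow> bool) \<Rightarrow> 'a list \<Rightarrow> bool" where
  "longest_odd_cycle E C \<longleftrightarrow> is_odd_cycle E C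
      \<and> (\<forall>c. is_odd_cycle E c \<longrightarrow> length c \<le> length C)"

definition touches :: "('a \<Rightarrow> 'a \<Rightarrow> bool) \<Rightarrow> 'a list \<Rightarrow> 'a \<Rightarrow> 'a \<Rightarrow> bool" where
  "touches E C v w \<longleftrightarrow> v \<notin> set C \<and> w \<in> set C \<and>
     (\<exists>p. is_path E p \<and> hd p = v \<and> last p = w \<and> set p \<inter> set C = {w})"

definition T :: "('a \<Rightarrow> 'a \<Rightarrow> bool) \<Rightarrow> 'a list \<Rightarrow> 'a \<Rightarrow> 'a set" where
  "T E C v = {w \<in> set C. touches E C v w}"

definition is_clique :: "('a \<Rightarrow> 'a \<Rightarrow> bool) \<Rightarrow> 'a set \<Rightarrow> bool" where
  "is_clique E K \<longleftrightarrow> (\<forall>x\<in>K. \<forall>y\<in>K. x \<noteq> y \<longrightarrow> E x y)"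

end

theory Submission
  imports Defs
begin

text \<open>If v touches two vertices a and b of the odd cycle C, the two touching paths combine
into an ear R: a path from a to b whose inner vertices avoid C. Were a and b non-adjacent, both
arcs of C between them would have at least two edges, and since C is odd, one of the arcs closes
up with R to an odd cycle. That cycle shares at least two edges with C (those of the arc) without
being C (it uses the last edge of R), which is impossible in G*.\<close>

lemma is_walk_iff_successively: "is_walk E p \<longleftrightarrow> p \<noteq> [] \<and> successively E p"
  by (simp add: is_walk_def successively_conv_nth)

lemma successively_rev_sym:
  assumes "\<And>x y. E x y \<Longrightarrow> E y x"
  shows "successively E (rev xs) \<longleftrightarrow> successively E xs"
proof -
  have "(\<lambda>x y. E y x) = E" using assms by blast
  then show ?thesis by (metis successively_rev)
qed

lemma successively_distinct_shortcut:
  "successively E w \<Longrightarrow> w \<noteq> [] \<Longrightarrow>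
    \<exists>p. successively E p \<and> p \<noteq> [] \<and> distinct p \<and> hd p = hd w \<and> last p = last w \<and> set p \<subseteq> set w"
proof (induction "length w" arbitrary: w rule: less_induct)
  case less
  show ?case
  proof (cases "distinct w")
    case True
    then show ?thesis using less.prems by blast
  next
    case False
    then obtain xs ys zs y where w: "w = xs @ [y] @ ys @ [y] @ zs"
      using not_distinct_decomp by blast
    let ?w = "xs @ [y] @ zs"
    have "successively E ?w"
      using less.prems(1) by (auto simp: w successively_append_iff successively_Cons)
    moreover have "length ?w < length w" "hd ?w = hd w" "last ?w = last w" "set ?w \<subseteq> set w"
      by (auto simp: w hd_append)
    ultimately show ?thesis using less.hyps[of ?w] by fastforce
  qed
qed

lemma successively_closed_iff_nth:
  assumes "c \<noteq> []"
  shows "successively E c \<and> E (last c) (hd c) \<longleftrightarrow> (\<forall>i<length c. E (c!i) (c!(Suc i mod length c)))"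
proof -
  obtain m where m: "length c = Suc m" using assms by (cases c) auto
  have "(\<forall>i<length c. E (c!i) (c!(Suc i mod length c))) \<longleftrightarrow>
      (\<forall>i<m. E (c!i) (c!Suc i)) \<and> E (c!m) (c!0)"
  proof -
    have "Suc i mod Suc m = Suc i" if "i < m" for i using that by simp
    then show ?thesis by (auto simp: m less_Suc_eq)
  qed
  moreover have "last c = c!m" "hd c = c!0" using assms m by (auto simp: last_conv_nth hd_conv_nth)
  ultimately show ?thesis by (simp add: successively_conv_nth m)
qed

lemma is_cycle_iff_nth:
  "is_cycle E c \<longleftrightarrow> 3 \<le> length c \<and> distinct c \<and> (\<forall>i<length c. E (c!i) (c!(Suc i mod length c)))"
proof (cases "c = []")
  case True
  then show ?thesis by (simp add: is_cycle_def)
next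
  case False
  then show ?thesis using successively_closed_iff_nth[OF False, of E]
    by (auto simp: is_cycle_def is_path_def is_walk_iff_successively)
qed

lemma is_odd_cycle_rotate:
  assumes "is_odd_cycle E C"
  shows "is_odd_cycle E (rotate k C)"
proof -
  let ?n = "length C"
  have C: "3 \<le> ?n" "distinct C" "\<forall>i<?n. E (C!i) (C!(Suc i mod ?n))" "odd ?n"
    using assms by (auto simp: is_odd_cycle_def is_cycle_iff_nth)
  have "E (rotate k C ! i) (rotate k C ! (Suc i mod ?n))" if "i < ?n" for i
  proof -
    have "(k + Suc i mod ?n) mod ?n = Suc ((k + i) mod ?n) mod ?n"
      by (simp add: mod_add_right_eq mod_Suc_eq)
    moreover have "Suc i mod ?n < ?n" "(k + i) mod ?n < ?n"
      using C(1) by (auto intro: mod_less_divisor)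
    ultimately show ?thesis using that C(3) by (simp add: nth_rotate)
  qed
  then show ?thesis using C by (simp add: is_odd_cycle_def is_cycle_iff_nth)
qed

lemma finite_cycle_edges: "finite (cycle_edges c)"
proof -
  have "cycle_edges c = (\<lambda>i. {c!i, c!(Suc i mod length c)}) ` {..<length c}"
    by (auto simp: cycle_edges_def)
  then show ?thesis by simp
qed

lemma cycle_edges_subset: "e \<in> cycle_edges c \<Longrightarrow> e \<subseteq> set c"
  by (auto simp: cycle_edges_def intro!: nth_mem mod_less_divisor)

lemma consecutive_in_cycle_edges: "Suc i < length c \<Longrightarrow> {c!i, c!Suc i} \<in> cycle_edges c"
  unfolding cycle_edges_def by (rule CollectI, rule exI[of _ i]) auto

lemma closing_edge_in_cycle_edges: "c \<noteq> [] \<Longrightarrow> {last c, hd c} \<in> cycle_edges c"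
  unfolding cycle_edges_def
  by (rule CollectI, rule exI[of _ "length c - 1"]) (auto simp: last_conv_nth hd_conv_nth insert_commute)

lemma is_odd_cycle_arc_ear:
  assumes D: "is_cycle E D" and k: "1 \<le> k" "k < length D"
    and R: "R \<noteq> []" "distinct R" "set R \<inter> set D = {}"
    and ear: "successively E (D!k # R @ [D!0])" and odd: "odd (Suc k + length R)"
  shows "is_odd_cycle E (take (Suc k) D @ R)"
proof -
  let ?arc = "take (Suc k) D"
  have D_walk: "successively E D" "distinct D"
    using D by (auto simp: is_cycle_def is_path_def is_walk_iff_successively)
  have "successively E ?arc"
    using D_walk(1) successively_append_iff[of E ?arc "drop (Suc k) D"] by simp
  moreover have "last ?arc = D!k"
    using k by (simp add: take_Suc_conv_app_nth)
  moreover have "E (D!k) (hd R)" "successively E R" "E (last R) (D!0)"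
    using ear R(1) by (auto simp: successively_append_iff successively_Cons)
  ultimately have "successively E (?arc @ R)" "E (last (?arc @ R)) (hd (?arc @ R))"
    using k R(1) by (auto simp: successively_append_iff hd_append hd_conv_nth)
  moreover have "distinct (?arc @ R)"
    using D_walk(2) R set_take_subset[of "Suc k" D] by auto
  moreover have "length (?arc @ R) = Suc k + length R" "length R \<ge> 1"
    using k R(1) by (auto simp: Suc_le_eq)
  ultimately show ?thesis
    using k odd by (auto simp: is_odd_cycle_def is_cycle_def is_path_def is_walk_iff_successively)
qed

lemma in_Gstar_no_odd_ear:
  assumes G: "in_Gstar E" and D: "is_odd_cycle E D" and k: "2 \<le> k" "k < length D"
    and R: "R \<noteq> []" "distinct R" "set R \<inter> set D = {}"
    and ear: "successively E (D!k # R @ [D!0])" and odd: "odd (Suc k + length R)"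
  shows False
proof -
  define c where "c = take (Suc k) D @ R"
  have c: "is_odd_cycle E c"
    unfolding c_def using D k R ear odd by (intro is_odd_cycle_arc_ear) (auto simp: is_odd_cycle_def)
  have c_nth: "c!i = D!i" if "i \<le> k" for i
    using that k by (simp add: c_def nth_append)
  have "length c = Suc k + length R" using k by (simp add: c_def)
  then have shared: "{D!i, D!Suc i} \<in> cycle_edges c \<inter> cycle_edges D" if "i < k" for i
    using that k consecutive_in_cycle_edges[of i c] consecutive_in_cycle_edges[of i D] c_nth
    by simp
  have "D!0 \<noteq> D!2" "D!0 \<noteq> D!1"
    using D k nth_eq_iff_index_eq[of D 0 2] nth_eq_iff_index_eq[of D 0 1]
    by (auto simp: is_odd_cycle_def is_cycle_def is_path_def simp flip: length_greater_0_conv)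
  then have "card {{D!0, D!1}, {D!1, D!2}} = 2"
    by (auto simp: doubleton_eq_iff)
  moreover have "{{D!0, D!1}, {D!1, D!2}} \<subseteq> cycle_edges c \<inter> cycle_edges D"
    using shared[of 0] shared[of 1] k by (simp add: numeral_2_eq_2)
  ultimately have "2 \<le> card (cycle_edges c \<inter> cycle_edges D)"
    by (metis card_mono finite_Int finite_cycle_edges)
  moreover have "cycle_edges c \<noteq> cycle_edges D"
  proof -
    have "{last R, D!0} \<in> cycle_edges c"
      using closing_edge_in_cycle_edges[of c] c_nth[of 0] R(1) by (simp add: c_def hd_conv_nth)
    moreover have "last R \<notin> set D" using R last_in_set[of R] by blast
    ultimately show ?thesis using cycle_edges_subset by blast
  qed
  ultimately show False using G c D by (force simp: in_Gstar_def)
qed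

lemma in_Gstar_ear_ends_adjacent_nth:
  assumes sym: "\<And>x y. E x y \<Longrightarrow> E y x" and G: "in_Gstar E" and C: "is_odd_cycle E C"
    and ij: "i < j" "j < length C"
    and ear: "successively E (C!i # R @ [C!j])" and R: "distinct R" "set R \<inter> set C = {}"
  shows "E (C!i) (C!j)"
proof (rule ccontr)
  assume nonadj: "\<not> E (C!i) (C!j)"
  let ?n = "length C"
  have C_adj: "\<forall>i<?n. E (C!i) (C!(Suc i mod ?n))" and "3 \<le> ?n" "odd ?n"
    using C by (auto simp: is_odd_cycle_def is_cycle_iff_nth)
  have "R \<noteq> []" using ear nonadj by auto
  have "C \<noteq> []" using ij by auto
  define k1 where "k1 = j - i"
  define k2 where "k2 = ?n - j + i"
  have "k1 \<noteq> 1"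
  proof
    assume "k1 = 1"
    then have "j = Suc i" using ij by (simp add: k1_def)
    then show False using C_adj[rule_format, of i] ij nonadj by simp
  qed
  moreover have "k2 \<noteq> 1"
  proof
    assume "k2 = 1"
    then have "i = 0" "j = ?n - 1" using ij by (auto simp: k2_def)
    moreover have "Suc (?n - 1) = ?n" using ij by simp
    ultimately show False using C_adj[rule_format, of "?n - 1"] ij sym nonadj by auto
  qed
  ultimately have arcs: "2 \<le> k1" "2 \<le> k2" "k1 + k2 = ?n" using ij by (auto simp: k1_def k2_def)
  then have "odd (Suc k1 + length R) \<or> odd (Suc k2 + length R)"
    using \<open>odd ?n\<close> by presburger
  then consider "odd (Suc k1 + length R)" | "odd (Suc k2 + length R)" by blast
  then show False
  proof cases
    case 1
    have "rotate i C ! 0 = C!i" "rotate i C ! k1 = C!j"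
      using \<open>C \<noteq> []\<close> ij arcs nth_rotate[of 0 C i] nth_rotate[of k1 C i] by (auto simp: k1_def)
    moreover have "successively E (C!j # rev R @ [C!i])"
      using ear successively_rev_sym[of E "C!i # R @ [C!j]", OF sym] by simp
    ultimately show False
      using in_Gstar_no_odd_ear[OF G is_odd_cycle_rotate[OF C, of i], of k1 "rev R"] arcs R
        \<open>R \<noteq> []\<close> 1 by auto
  next
    case 2
    have "(j + k2) mod ?n = i" using ij by (simp add: k2_def)
    then have "rotate j C ! 0 = C!j" "rotate j C ! k2 = C!i"
      using \<open>C \<noteq> []\<close> ij arcs nth_rotate[of 0 C j] nth_rotate[of k2 C j] by auto
    then show False
      using in_Gstar_no_odd_ear[OF G is_odd_cycle_rotate[OF C, of j], of k2 R] arcs R ear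
        \<open>R \<noteq> []\<close> 2 by auto
  qed
qed

lemma in_Gstar_ear_ends_adjacent:
  assumes sym: "\<And>x y. E x y \<Longrightarrow> E y x" and G: "in_Gstar E" and C: "is_odd_cycle E C"
    and ab: "a \<in> set C" "b \<in> set C" "a \<noteq> b"
    and ear: "successively E (a # R @ [b])" and R: "distinct R" "set R \<inter> set C = {}"
  shows "E a b"
proof -
  obtain i j where ij: "i < length C" "j < length C" "a = C!i" "b = C!j"
    using ab by (auto simp: in_set_conv_nth)
  with ab(3) consider "i < j" | "j < i" by (metis linorder_neqE_nat)
  then show ?thesis
  proof cases
    case 1
    then show ?thesis using in_Gstar_ear_ends_adjacent_nth[OF sym G C] ij ear R by blast
  next
    case 2
    have "successively E (b # rev R @ [a])"
      using ear successively_rev_sym[of E "a # R @ [b]", OF sym] by simp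
    then show ?thesis using in_Gstar_ear_ends_adjacent_nth[OF sym G C 2] ij R sym by auto
  qed
qed

lemma touches_ear:
  assumes sym: "\<And>x y. E x y \<Longrightarrow> E y x"
    and a: "touches E C v a" and b: "touches E C v b" and "a \<noteq> b"
  obtains R where "successively E (a # R @ [b])" "distinct (a # R @ [b])" "set R \<inter> set C = {}"
proof -
  obtain p where p: "is_path E p" "hd p = v" "last p = a" "set p \<inter> set C = {a}" and "v \<notin> set C"
    using a by (auto simp: touches_def)
  obtain q where q: "is_path E q" "hd q = v" "last q = b" "set q \<inter> set C = {b}"
    using b by (auto simp: touches_def)
  obtain u p' where p': "p = v # u # p'"
    using p \<open>v \<notin> set C\<close> by (cases p rule: remdups_adj.cases) (auto simp: is_path_def is_walk_def)
  define w where "w = rev (u # p') @ q"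
  have "successively E w" "w \<noteq> []" "hd w = a" "last w = b"
    using p q p' sym successively_rev_sym[of E "u # p'", OF sym]
    by (auto simp: w_def is_path_def is_walk_iff_successively successively_append_iff
        successively_Cons hd_rev last_rev)
  then obtain s where s: "successively E s" "s \<noteq> []" "distinct s" "hd s = a" "last s = b"
    and "set s \<subseteq> set w"
    using successively_distinct_shortcut by blast
  then have "set s \<inter> set C \<subseteq> {a, b}" using p p' q by (auto simp: w_def)
  obtain R where "s = a # R @ [b]"
    using s \<open>a \<noteq> b\<close> by (metis append_butlast_last_id hd_Cons_tl last_ConsL last_ConsR)
  then show ?thesis using that s \<open>set s \<inter> set C \<subseteq> {a, b}\<close> by auto
qed

theorem mainTheorem5:
  fixes V :: "'a set" and E :: "'a \<Rightarrow> 'a \<Rightarrow> bool" and C :: "'a list" and v :: 'a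
  assumes "simple_graph V E"
    and "in_Gstar E"
    and "two_connected V E"
    and "longest_odd_cycle E C"
    and "length C \<ge> 5"
    and "V - set C \<noteq> {}"
    and "v \<in> V - set C"
  shows "is_clique E (T E C v)"
  unfolding is_clique_def T_def
proof (intro ballI impI)
  have sym: "\<And>x y. E x y \<Longrightarrow> E y x" using assms(1) by (auto simp: simple_graph_def)
  have C: "is_odd_cycle E C" using assms(4) by (simp add: longest_odd_cycle_def)
  fix a b assume a: "a \<in> {w \<in> set C. touches E C v w}" and b: "b \<in> {w \<in> set C. touches E C v w}"
    and "a \<noteq> b"
  then obtain R where "successively E (a # R @ [b])" "distinct (a # R @ [b])" "set R \<inter> set C = {}"
    using touches_ear[of E C v a b, OF sym] by blast
  then show "E a b"
    using in_Gstar_ear_ends_adjacent[OF sym assms(2) C] a b \<open>a \<noteq> b\<close> by simp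
qed

end
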